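(* Let $f:\mathbb{R}^n\to\mathbb{R}^n$ be locally Lipschitz, and let $V_1,V_2\in C^1(\mathbb{R}^n)$, continuous $N_1,N_2:\mathbb{R}^n\to[0,\infty)$, and continuous $h:[0,\infty)\to[0,\infty)$ with $h(0)=0$ and $\sup_{r>0}h(r)/r<\infty$ satisfy $\nabla V_1\cdot f\le -N_1$ and $\nabla V_2\cdot f\le -N_2+h(N_1)$ on $\mathbb{R}^n$. Assume every solution of $\dot x=f(x)$ is defined and bounded on $[0,\infty)$ and that along every solution the maps $t\mapsto N_i(x(t))$ are uniformly continuous on $[0,\infty)$. Let $E:=\{x\in\mathbb{R}^n:N_1(x)=0,\ N_2(x)=0\}$. If every point of $E$ is Lyapunov stable, then every solution converges as $t\to\infty$ to a point of $E$, and $E$ is pointwise asymptotically stable.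
   Context: A point $z$ is Lyapunov stable for $\dot x=f(x)$ if for every neighborhood $U$ of $z$ there is a neighborhood $V\subset U$ of $z$ such that every solution starting in $V$ remains in $U$ for all $t\ge0$. A set $Z$ is pointwise asymptotically stable (PAS) if (A1) every $z\in Z$ is Lyapunov stable and (A2) solutions starting sufficiently near $Z$ converge, with $\lim_{t\to\infty}x(t)\in Z$. *)

theory Defs
  imports "HOL-Analysis.Analysis"
begin

definition fwd_solution :: "('a::real_normed_vector \<Rightarrow> 'a) \<Rightarrow> (real \<Rightarrow> 'a) \<Rightarrow> bool" where
  "fwd_solution f x \<longleftrightarrow>
     (\<forall>t\<in>{0..}. (x has_vector_derivative f (x t)) (at t within {0..}))"

definition lyapunov_stable :: "('a::real_normed_vector \<Rightarrow> 'a) \<Rightarrow> 'a \<Rightarrow> bool" where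
  "lyapunov_stable f z \<longleftrightarrow>
     (\<forall>U. open U \<and> z \<in> U \<longrightarrow>
        (\<exists>V. open V \<and> z \<in> V \<and> V \<subseteq> U \<and>
           (\<forall>x. fwd_solution f x \<and> x 0 \<in> V \<longrightarrow> (\<forall>t\<ge>0. x t \<in> U))))"

definition pointwise_asymp_stable :: "('a::real_normed_vector \<Rightarrow> 'a) \<Rightarrow> 'a set \<Rightarrow> bool" where
  "pointwise_asymp_stable f Z \<longleftrightarrow>
     (\<forall>z\<in>Z. lyapunov_stable f z) \<and>
     (\<exists>W. open W \<and> Z \<subseteq> W \<and>
        (\<forall>x. fwd_solution f x \<and> x 0 \<in> W \<longrightarrow> (\<exists>z\<in>Z. (x \<longlongrightarrow> z) at_top)))"

end

theory Submission
  imports Defs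
begin

text \<open>
  Since h grows at most linearly, W = V2 + K V1 is, for K large, a Lyapunov function with
  derivative at most -(N1 + N2) along solutions. W is bounded below on each (bounded)
  trajectory and N1 + N2 is uniformly continuous along it, so a Barbalat-type argument shows
  that N1 + N2 tends to 0 along every trajectory. Hence every limit point of a trajectory lies
  in E, and a Lyapunov stable point in the closure of a trajectory attracts the whole trajectory.
\<close>

lemma DERIV_upper_bound_imp_decrease:
  fixes \<phi> d :: "real \<Rightarrow> real"
  assumes "a \<le> b"
    and der: "\<And>t. a \<le> t \<Longrightarrow> t \<le> b \<Longrightarrow> (\<phi> has_real_derivative d t) (at t)"
    and bound: "\<And>t. a \<le> t \<Longrightarrow> t \<le> b \<Longrightarrow> d t \<le> - m"
  shows "\<phi> b \<le> \<phi> a - m * (b - a)"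
proof (cases "a = b")
  case False
  then obtain \<xi> where \<xi>: "a < \<xi>" "\<xi> < b" "\<phi> b - \<phi> a = (b - a) * d \<xi>"
    using MVT2[of a b \<phi> d] der \<open>a \<le> b\<close> by auto
  have "(b - a) * d \<xi> \<le> (b - a) * - m"
    using bound \<xi> by (intro mult_left_mono) auto
  with \<xi> show ?thesis by (simp add: algebra_simps)
qed simp

lemma barbalat:
  fixes \<phi> d g :: "real \<Rightarrow> real"
  assumes der: "\<And>t. t > 0 \<Longrightarrow> (\<phi> has_real_derivative d t) (at t)"
    and dissip: "\<And>t. t > 0 \<Longrightarrow> d t \<le> - g t"
    and g_nonneg: "\<And>t. g t \<ge> 0"
    and g_uc: "uniformly_continuous_on {0..} g"
    and \<phi>_bdd: "\<And>t. t > 0 \<Longrightarrow> \<phi> t \<ge> M"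
  shows "(g \<longlongrightarrow> 0) at_top"
proof (rule ccontr)
  assume "\<not> (g \<longlongrightarrow> 0) at_top"
  then obtain e where e: "e > 0" and often: "\<And>T. \<exists>t\<ge>T. g t \<ge> e"
    using g_nonneg by (force simp: tendsto_iff dist_real_def eventually_at_top_linorder not_less)
  obtain \<delta> where \<delta>: "\<delta> > 0"
    and g_close: "\<And>s t. s \<ge> 0 \<Longrightarrow> t \<ge> 0 \<Longrightarrow> \<bar>s - t\<bar> < \<delta> \<Longrightarrow> \<bar>g s - g t\<bar> < e/2"
    using g_uc e unfolding uniformly_continuous_on_def dist_real_def
    by (metis atLeast_iff half_gt_zero)
  define \<eta> where "\<eta> = e/2 * (\<delta>/2)"
  have decreasing: "\<phi> b \<le> \<phi> a" if "0 < a" "a \<le> b" for a b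
    using DERIV_upper_bound_imp_decrease[of a b \<phi> d 0] der dissip g_nonneg that
    by (smt (verit, best) mult_zero_left)
  \<comment> \<open>After each visit of g above e, g stays above e/2 for time \<delta>/2, so \<phi> drops by \<eta>.\<close>
  have drop: "\<exists>t'\<ge>1. \<phi> t' \<le> \<phi> t - \<eta>" if "t \<ge> 1" for t
  proof -
    obtain s where s: "s \<ge> t" "g s \<ge> e" using often by blast
    have "\<phi> (s + \<delta>/2) \<le> \<phi> s - e/2 * (s + \<delta>/2 - s)"
    proof (rule DERIV_upper_bound_imp_decrease)
      fix u assume u: "s \<le> u" "u \<le> s + \<delta>/2"
      have "\<bar>g u - g s\<bar> < e/2" using u s that \<delta> by (intro g_close) auto
      then have "g u \<ge> e/2" using s by linarith
      then show "d u \<le> - (e/2)" using dissip[of u] u that s by linarith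
    qed (use s that \<delta> der in auto)
    also have "\<phi> s \<le> \<phi> t" using decreasing s that by auto
    finally show ?thesis using s that \<delta> by (intro exI[of _ "s + \<delta>/2"]) (auto simp: \<eta>_def)
  qed
  have "\<exists>t\<ge>1. \<phi> t \<le> \<phi> 1 - real n * \<eta>" for n
  proof (induction n)
    case (Suc n)
    then obtain t where "t \<ge> 1" "\<phi> t \<le> \<phi> 1 - real n * \<eta>" by blast
    with drop[of t] show ?case by (auto simp: algebra_simps)
  qed auto
  moreover have "\<eta> > 0" using e \<delta> by (simp add: \<eta>_def)
  then obtain n where "\<phi> 1 - M < real n * \<eta>"
    using reals_Archimedean3 by blast
  ultimately obtain t where "t \<ge> 1" "\<phi> t \<le> \<phi> 1 - real n * \<eta>" by blast
  with \<phi>_bdd[of t] \<open>\<phi> 1 - M < real n * \<eta>\<close> show False by linarith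
qed

lemma fwd_solution_shift:
  assumes "fwd_solution f x" "T \<ge> 0"
  shows "fwd_solution f (\<lambda>s. x (T + s))"
  unfolding fwd_solution_def
proof
  fix s :: real assume "s \<in> {0..}"
  have shift: "((+) T has_vector_derivative 1) (at s within {0..})"
    by (auto intro!: derivative_eq_intros)
  have "(x has_vector_derivative f (x (T + s))) (at (T + s) within {0..})"
    using assms \<open>s \<in> {0..}\<close> unfolding fwd_solution_def by auto
  then have "(x has_vector_derivative f (x (T + s))) (at (T + s) within (+) T ` {0..})"
    by (rule has_vector_derivative_within_subset) (use assms in auto)
  from vector_diff_chain_within[OF shift this]
  show "((\<lambda>s. x (T + s)) has_vector_derivative f (x (T + s))) (at s within {0..})"
    by (simp add: o_def)
qed

lemma fwd_solution_has_vector_derivative_at: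
  assumes "fwd_solution f x" "t > 0"
  shows "(x has_vector_derivative f (x t)) (at t)"
proof -
  have "(x has_vector_derivative f (x t)) (at t within {0..})"
    using assms unfolding fwd_solution_def by auto
  then have "(x has_vector_derivative f (x t)) (at t within {0<..})"
    by (rule has_vector_derivative_within_subset) auto
  then show ?thesis using at_within_open[of t "{0<..}"] assms(2) by simp
qed

lemma has_real_derivative_comp_curve:
  fixes V :: "'a::real_normed_vector \<Rightarrow> real"
  assumes V: "(V has_derivative DV) (at (x t))" and x: "(x has_vector_derivative w) (at t)"
  shows "((\<lambda>t. V (x t)) has_real_derivative DV w) (at t)"
proof -
  have "((\<lambda>t. V (x t)) has_derivative (\<lambda>r. DV (r *\<^sub>R w))) (at t)"
    using has_derivative_compose[OF x[unfolded has_vector_derivative_def] V] by simp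
  moreover have "(\<lambda>r. DV (r *\<^sub>R w)) = (*) (DV w)"
    using linear_scale[OF has_derivative_linear[OF V]] by (auto simp: fun_eq_iff)
  ultimately show ?thesis by (simp add: has_field_derivative_def)
qed

lemma lyapunov_dissipation_tendsto_zero:
  fixes f :: "'a::{real_normed_vector,heine_borel} \<Rightarrow> 'a" and V N :: "'a \<Rightarrow> real"
  assumes V_deriv: "\<And>y. (V has_derivative DV y) (at y)"
    and dissip: "\<And>y. DV y (f y) \<le> - N y"
    and N_nonneg: "\<And>y. N y \<ge> 0"
    and sol: "fwd_solution f x"
    and bdd: "bounded (x ` {0..})"
    and N_uc: "uniformly_continuous_on {0..} (\<lambda>t. N (x t))"
  shows "((\<lambda>t. N (x t)) \<longlongrightarrow> 0) at_top"
proof -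
  have "continuous_on UNIV V"
    using V_deriv has_derivative_continuous by (blast intro: continuous_at_imp_continuous_on)
  then have "compact (V ` closure (x ` {0..}))"
    using bdd compact_closure by (blast intro: compact_continuous_image continuous_on_subset)
  then have "bdd_below (V ` closure (x ` {0..}))"
    by (simp add: bounded_imp_bdd_below compact_imp_bounded)
  then obtain M where M: "\<And>y. y \<in> closure (x ` {0..}) \<Longrightarrow> M \<le> V y"
    unfolding bdd_below_def by auto
  show ?thesis
  proof (rule barbalat)
    show "((\<lambda>t. V (x t)) has_real_derivative DV (x t) (f (x t))) (at t)" if "t > 0" for t
      using fwd_solution_has_vector_derivative_at[OF sol that]
      by (rule has_real_derivative_comp_curve[OF V_deriv])
    show "V (x t) \<ge> M" if "t > 0" for t
      using that by (intro M closure_subset[THEN subsetD]) simp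
    show "DV (x t) (f (x t)) \<le> - N (x t)" for t
      by (rule dissip)
  qed (use N_nonneg N_uc in auto)
qed

lemma lyapunov_stable_in_closure_imp_tendsto:
  assumes stable: "lyapunov_stable f z" and sol: "fwd_solution f x"
    and z: "z \<in> closure (x ` {0..})"
  shows "(x \<longlongrightarrow> z) at_top"
proof (rule topological_tendstoI)
  fix U assume "open U" "z \<in> U"
  then obtain V where "open V" "z \<in> V"
    and stays: "\<And>y. fwd_solution f y \<Longrightarrow> y 0 \<in> V \<Longrightarrow> \<forall>t\<ge>0. y t \<in> U"
    using stable unfolding lyapunov_stable_def by meson
  then have "V \<inter> x ` {0..} \<noteq> {}"
    using z open_Int_closure_eq_empty by blast
  then obtain T where "T \<ge> 0" "x T \<in> V" by auto
  then have "\<forall>s\<ge>0. x (T + s) \<in> U"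
    using stays[OF fwd_solution_shift[OF sol]] by simp
  then have "\<forall>t\<ge>T. x t \<in> U"
    by (metis add.commute diff_add_cancel diff_ge_0_iff_ge)
  then show "eventually (\<lambda>t. x t \<in> U) at_top"
    unfolding eventually_at_top_linorder by blast
qed

lemma bounded_trajectory_tendsto_stable_zero:
  fixes x :: "real \<Rightarrow> 'a::{real_normed_vector,heine_borel}" and N :: "'a \<Rightarrow> real"
  assumes sol: "fwd_solution f x" and bdd: "bounded (x ` {0..})"
    and N_cont: "continuous_on UNIV N"
    and N_lim: "((\<lambda>t. N (x t)) \<longlongrightarrow> 0) at_top"
    and stable: "\<And>z. N z = 0 \<Longrightarrow> lyapunov_stable f z"
  shows "\<exists>z. N z = 0 \<and> (x \<longlongrightarrow> z) at_top"
proof -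
  have "bounded (range (\<lambda>n::nat. x (real n)))"
    by (rule bounded_subset[OF bdd]) auto
  then obtain z r where r: "strict_mono r" and lim: "(\<lambda>n. x (real (r n))) \<longlonglongrightarrow> z"
    using bounded_imp_convergent_subsequence unfolding o_def by blast
  have "filterlim (\<lambda>n. real (r n)) at_top sequentially"
    by (rule filterlim_compose[OF filterlim_real_sequentially filterlim_subseq[OF r]])
  then have "(\<lambda>n. N (x (real (r n)))) \<longlonglongrightarrow> 0"
    by (rule filterlim_compose[OF N_lim])
  moreover have "(\<lambda>n. N (x (real (r n)))) \<longlonglongrightarrow> N z"
    by (rule continuous_on_tendsto_compose[OF N_cont lim]) auto
  ultimately have "N z = 0"
    using LIMSEQ_unique by blast
  moreover have "z \<in> closure (x ` {0..})"
    using lim unfolding closure_sequential by (intro exI[of _ "\<lambda>n. x (real (r n))"]) auto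
  ultimately show ?thesis
    using lyapunov_stable_in_closure_imp_tendsto[OF stable sol] by blast
qed

lemma bdd_above_quotient_imp_linear_bound:
  fixes h :: "real \<Rightarrow> real"
  assumes "bdd_above ((\<lambda>r. h r / r) ` {0<..})" "h 0 = 0"
  obtains c where "\<And>r. r \<ge> 0 \<Longrightarrow> h r \<le> c * r"
proof -
  obtain c where c: "\<And>r. r > 0 \<Longrightarrow> h r / r \<le> c"
    using assms(1) unfolding bdd_above_def by auto
  have "h r \<le> c * r" if "r \<ge> 0" for r
  proof (cases "r = 0")
    case False
    then show ?thesis using c[of r] that by (simp add: divide_le_eq mult.commute)
  qed (simp add: assms(2))
  then show ?thesis using that by blast
qed

theorem corollary2p6:
  fixes f :: "'a::euclidean_space \<Rightarrow> 'a"
    and V1 V2 :: "'a \<Rightarrow> real" and G1 G2 :: "'a \<Rightarrow> 'a"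
    and N1 N2 :: "'a \<Rightarrow> real" and h :: "real \<Rightarrow> real"
  assumes lip: "local_lipschitz (UNIV :: real set) UNIV (\<lambda>_. f)"
    and V1_C1: "\<And>x. (V1 has_derivative (\<lambda>v. G1 x \<bullet> v)) (at x)" "continuous_on UNIV G1"
    and V2_C1: "\<And>x. (V2 has_derivative (\<lambda>v. G2 x \<bullet> v)) (at x)" "continuous_on UNIV G2"
    and N_cont: "continuous_on UNIV N1" "continuous_on UNIV N2"
    and N_nonneg: "\<And>x. N1 x \<ge> 0" "\<And>x. N2 x \<ge> 0"
    and h_cont: "continuous_on {0..} h"
    and h_nonneg: "\<And>r. r \<ge> 0 \<Longrightarrow> h r \<ge> 0"
    and h0: "h 0 = 0"
    and h_lin: "bdd_above ((\<lambda>r. h r / r) ` {0<..})"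
    and dec1: "\<And>x. G1 x \<bullet> f x \<le> - N1 x"
    and dec2: "\<And>x. G2 x \<bullet> f x \<le> - N2 x + h (N1 x)"
    and complete: "\<And>x0. \<exists>x. fwd_solution f x \<and> x 0 = x0"
    and bounded_sol: "\<And>x. fwd_solution f x \<Longrightarrow> bounded (x ` {0..})"
    and unif1: "\<And>x. fwd_solution f x \<Longrightarrow> uniformly_continuous_on {0..} (\<lambda>t. N1 (x t))"
    and unif2: "\<And>x. fwd_solution f x \<Longrightarrow> uniformly_continuous_on {0..} (\<lambda>t. N2 (x t))"
    and stable: "\<And>z. z \<in> {x. N1 x = 0 \<and> N2 x = 0} \<Longrightarrow> lyapunov_stable f z"
  shows "(\<forall>x. fwd_solution f x \<longrightarrow> (\<exists>z\<in>{x. N1 x = 0 \<and> N2 x = 0}. (x \<longlongrightarrow> z) at_top))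
         \<and> pointwise_asymp_stable f {x. N1 x = 0 \<and> N2 x = 0}"
proof -
  have zero_set: "N1 z + N2 z = 0 \<longleftrightarrow> z \<in> {x. N1 x = 0 \<and> N2 x = 0}" for z
    using N_nonneg[of z] by auto
  obtain c where h_le: "\<And>r. r \<ge> 0 \<Longrightarrow> h r \<le> c * r"
    using bdd_above_quotient_imp_linear_bound[OF h_lin h0] by blast
  define K where "K = \<bar>c\<bar> + 1"
  have V_deriv:
    "((\<lambda>y. V2 y + K * V1 y) has_derivative (\<lambda>v. G2 y \<bullet> v + K * (G1 y \<bullet> v))) (at y)" for y
    by (intro derivative_intros V1_C1(1) V2_C1(1))
  have dissip: "G2 y \<bullet> f y + K * (G1 y \<bullet> f y) \<le> - (N1 y + N2 y)" for y
  proof -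
    have "K * (G1 y \<bullet> f y) \<le> K * - N1 y"
      using dec1[of y] by (intro mult_left_mono) (auto simp: K_def)
    moreover have "c * N1 y \<le> (K - 1) * N1 y"
      using N_nonneg(1)[of y] by (intro mult_right_mono) (auto simp: K_def)
    ultimately show ?thesis
      using dec2[of y] h_le[OF N_nonneg(1), of y] by (simp add: algebra_simps)
  qed
  have converges: "\<exists>z\<in>{x. N1 x = 0 \<and> N2 x = 0}. (x \<longlongrightarrow> z) at_top"
    if sol: "fwd_solution f x" for x
  proof -
    have "((\<lambda>t. N1 (x t) + N2 (x t)) \<longlongrightarrow> 0) at_top"
      using lyapunov_dissipation_tendsto_zero[OF V_deriv dissip _ sol bounded_sol[OF sol]]
        N_nonneg uniformly_continuous_on_add[OF unif1[OF sol] unif2[OF sol]] by simp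
    moreover have "continuous_on UNIV (\<lambda>y. N1 y + N2 y)"
      using N_cont by (intro continuous_intros)
    ultimately show ?thesis
      using bounded_trajectory_tendsto_stable_zero[OF sol bounded_sol[OF sol]] stable zero_set by blast
  qed
  then show ?thesis
    unfolding pointwise_asymp_stable_def using stable open_UNIV by blast
qed

end
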